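(* Let $(\lambda_j)_{j\ge1}$ be nonnegative with $\sum_j\lambda_j<\infty$ and $\lambda_j\le c\,j^{-\beta}$ for some $\beta>1$. Let $\gamma>0$ with $\beta\neq\gamma+1$, $0<\eta_0\le\bar\eta$ for a fixed constant $\bar\eta$, $\eta_i=\eta_0(1-i/N)^\gamma$ ($i=0,\dots,N-1$), $t_k=\sum_{i<k}\eta_i$, $T=t_N$, and assume $T\ge1$. Then $$\mathcal N_N:=\sum_{i=0}^{N-1}\eta_i^2\sum_{j\ge1}\lambda_j^2e^{-2\lambda_j(t_N-t_{i+1})}\lesssim\eta_0\,T^{-\min\{1-\frac1\beta,\,\frac{\gamma}{\gamma+1}\}},$$ with implicit constant independent of $N$ and $\eta_0$. *)

theory Defs
  imports "HOL-Analysis.Analysis"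
begin

definition step_size :: "real \<Rightarrow> real \<Rightarrow> nat \<Rightarrow> nat \<Rightarrow> real" where
  "step_size eta0 gamma N i = eta0 * (1 - real i / real N) powr gamma"

definition sched_time :: "real \<Rightarrow> real \<Rightarrow> nat \<Rightarrow> nat \<Rightarrow> real" where
  "sched_time eta0 gamma N k = (\<Sum>i<k. step_size eta0 gamma N i)"

text \<open>Noise term N_N; lam is indexed from 1 (lam 0 is ignored).\<close>
definition noise_term :: "(nat \<Rightarrow> real) \<Rightarrow> real \<Rightarrow> real \<Rightarrow> nat \<Rightarrow> real" where
  "noise_term lam eta0 gamma N =
     (\<Sum>i<N. (step_size eta0 gamma N i)\<^sup>2 *
        (\<Sum>j. (lam (Suc j))\<^sup>2 *
           exp (-2 * lam (Suc j) * (sched_time eta0 gamma N N - sched_time eta0 gamma N (Suc i)))))"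

end

theory Submission
  imports Defs
begin

text \<open>
  Let f(s) = sum_j lam_j^2 exp(-2 lam_j s). It is bounded, and since x^2 exp(-2xs) <= 1/s^2 and
  lam_j <= c j^-beta, only the indices j <= (cs)^(1/beta) contribute fully, so f(s) <~ s^-a with
  a = 2 - 1/beta.

  Counting the steps from the end, step N - m has size eta0 (m/N)^gamma and is followed by a
  remaining time of at least eta0 N^-gamma (m/2)^(gamma+1)/(gamma+1) = (m/B)^(gamma+1), where
  B/N ~ (eta0 N)^(-1/(gamma+1)). Hence N_N <~ eta0^2 sum_m (m/N)^(2 gamma) min(1, (m/B)^-q) with
  q = (gamma+1) a. This is a Riemann sum of x^(2 gamma) min(1, (x/b)^-q) with b = B/N and is
  <~ N b^min(2 gamma + 1, q): it is dominated by m <~ B if q > 2 gamma + 1 and by m ~ N if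
  q < 2 gamma + 1; the borderline q = 2 gamma + 1 is exactly beta = gamma + 1. Finally
  b^(gamma+1) ~ 1/(eta0 N) and T <= eta0 N turn the bound into eta0 (eta0 N)^-rho <= eta0 T^-rho.
\<close>

section \<open>Sums of powers\<close>

lemma powr_antideriv_increment:
  fixes x e :: real
  assumes "0 < x" "e \<noteq> -1"
  shows "\<exists>z\<in>{x<..<x+1}. (x+1) powr (e+1) / (e+1) - x powr (e+1) / (e+1) = z powr e"
proof -
  have "\<exists>z. x < z \<and> z < x+1 \<and>
      (x+1) powr (e+1) - x powr (e+1) = (x+1 - x) * ((e+1) * z powr (e+1-1))"
    using assms by (intro MVT2 has_real_derivative_powr) auto
  then obtain z where "x < z" "z < x+1" "(x+1) powr (e+1) - x powr (e+1) = (e+1) * z powr e"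
    by auto
  with assms(2) show ?thesis
    by (intro bexI[of _ z]) (auto simp: diff_divide_distrib[symmetric])
qed

lemma sum_powr_ge:
  fixes e :: real
  assumes "0 \<le> e"
  shows "real n powr (e+1) / (e+1) \<le> (\<Sum>k<n. real (Suc k) powr e)"
proof -
  define F where "F t = t powr (e+1) / (e+1)" for t :: real
  have "F (real (Suc k)) - F (real k) \<le> real (Suc k) powr e" for k
  proof (cases "k = 0")
    case False
    then obtain z where z: "real k < z" "z < real (Suc k)"
        "F (real (Suc k)) - F (real k) = z powr e"
      using powr_antideriv_increment[of "real k" e] assms by (auto simp: F_def add.commute)
    have "z powr e \<le> real (Suc k) powr e"
      using z assms by (intro powr_mono2) auto
    with z show ?thesis by simp
  qed (use assms in \<open>simp add: F_def\<close>)
  then have "(\<Sum>k<n. F (real (Suc k)) - F (real k)) \<le> (\<Sum>k<n. real (Suc k) powr e)"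
    by (rule sum_mono)
  moreover have "(\<Sum>k<n. F (real (Suc k)) - F (real k)) = F (real n)"
    using sum_lessThan_telescope[of "\<lambda>k. F (real k)" n] by (simp add: F_def)
  ultimately show ?thesis by (simp add: F_def)
qed

lemma sum_powr_le:
  fixes e :: real
  assumes "-1 < e"
  shows "(\<Sum>k<n. real (Suc k) powr e) \<le> max 1 (1 / (e+1)) * real n powr (e+1)"
proof (cases "0 \<le> e")
  case True
  have "(\<Sum>k<n. real (Suc k) powr e) \<le> (\<Sum>k<n. real n powr e)"
    using True by (intro sum_mono powr_mono2) auto
  also have "\<dots> = 1 * real n powr (e+1)"
    by (cases "n = 0") (auto simp: powr_add)
  also have "\<dots> \<le> max 1 (1 / (e+1)) * real n powr (e+1)"
    by (intro mult_right_mono) auto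
  finally show ?thesis .
next
  case False
  define F where "F t = t powr (e+1) / (e+1)" for t :: real
  have "real (Suc k) powr e \<le> F (real (Suc k)) - F (real k)" for k
  proof (cases "k = 0")
    case False
    then obtain z where z: "real k < z" "z < real (Suc k)"
        "F (real (Suc k)) - F (real k) = z powr e"
      using powr_antideriv_increment[of "real k" e] assms by (auto simp: F_def add.commute)
    have "real (Suc k) powr e \<le> z powr e"
      using z \<open>\<not> 0 \<le> e\<close> by (intro powr_mono2') auto
    with z show ?thesis by simp
  qed (use assms False in \<open>simp add: F_def\<close>)
  then have "(\<Sum>k<n. real (Suc k) powr e) \<le> (\<Sum>k<n. F (real (Suc k)) - F (real k))"
    by (rule sum_mono)
  also have "\<dots> = (1 / (e+1)) * real n powr (e+1)"
    using sum_lessThan_telescope[of "\<lambda>k. F (real k)" n] by (simp add: F_def)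
  also have "\<dots> \<le> max 1 (1 / (e+1)) * real n powr (e+1)"
    by (intro mult_right_mono) auto
  finally show ?thesis .
qed

lemma sum_powr_tail_le:
  fixes s :: real
  assumes "1 < s"
  shows "(\<Sum>k\<in>{M..<N}. real (Suc k) powr (-s)) \<le> s / (s-1) * real (Suc M) powr (1-s)"
proof (cases "M < N")
  case True
  define F where "F t = t powr (1-s) / (1-s)" for t :: real
  have "real (Suc k) powr (-s) \<le> F (real (Suc k)) - F (real k)" if "Suc M \<le> k" for k
  proof -
    have "0 < real k" using that by simp
    then obtain z where z: "real k < z" "z < real (Suc k)"
        "F (real (Suc k)) - F (real k) = z powr (-s)"
      using powr_antideriv_increment[of "real k" "-s"] assms by (auto simp: F_def add.commute)
    have "real (Suc k) powr (-s) \<le> z powr (-s)"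
      using z assms \<open>0 < real k\<close> by (intro powr_mono2') auto
    with z show ?thesis by simp
  qed
  then have "(\<Sum>k\<in>{Suc M..<N}. real (Suc k) powr (-s))
      \<le> (\<Sum>k\<in>{Suc M..<N}. F (real (Suc k)) - F (real k))"
    by (intro sum_mono) auto
  also have "\<dots> = F (real N) - F (real (Suc M))"
    using True by (subst sum_Suc_diff') auto
  also have "\<dots> = (real (Suc M) powr (1-s) - real N powr (1-s)) / (s-1)"
    unfolding F_def diff_divide_distrib[symmetric] by (metis minus_diff_eq minus_divide_divide)
  also have "\<dots> \<le> real (Suc M) powr (1-s) / (s-1)"
    using assms by (intro divide_right_mono) auto
  finally have "(\<Sum>k\<in>{M..<N}. real (Suc k) powr (-s))
      \<le> real (Suc M) powr (-s) + real (Suc M) powr (1-s) / (s-1)"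
    using True by (simp add: sum.atLeast_Suc_lessThan)
  also have "\<dots> \<le> real (Suc M) powr (1-s) + real (Suc M) powr (1-s) / (s-1)"
    by (intro add_right_mono powr_mono) auto
  also have "\<dots> = s / (s-1) * real (Suc M) powr (1-s)"
    using assms by (simp add: field_simps)
  finally show ?thesis .
qed (use assms in simp)

lemma sum_powr_min_le_convergent:
  fixes p q B :: real
  assumes "0 \<le> p" "p + 1 < q" "0 < B"
  shows "(\<Sum>k<N. real (Suc k) powr p * min 1 ((real (Suc k) / B) powr (-q)))
           \<le> (1 + (q-p) / (q-p-1)) * B powr (p+1)"
proof -
  define s where "s = q - p"
  define M where "M = nat \<lfloor>B\<rfloor>"
  define f where "f k = real (Suc k) powr p * min 1 ((real (Suc k) / B) powr (-q))" for k
  have f_nonneg: "0 \<le> f k" for k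
    by (simp add: f_def)
  have "B < real (Suc M)"
    unfolding M_def using assms by linarith
  have "sum f {..<N} \<le> sum f ({..<M} \<union> {M..<N})"
    using f_nonneg by (intro sum_mono2) auto
  also have "\<dots> = sum f {..<M} + sum f {M..<N}"
    by (intro sum.union_disjoint) auto
  also have "sum f {..<M} \<le> B powr (p+1)"
  proof -
    have "f k \<le> B powr p" if "k < M" for k
    proof -
      have "real (Suc k) \<le> B"
        using that by (simp add: M_def) linarith
      then have "real (Suc k) powr p \<le> B powr p"
        using assms by (intro powr_mono2) auto
      moreover have "f k \<le> real (Suc k) powr p"
        unfolding f_def by (intro mult_left_le) auto
      ultimately show ?thesis
        by linarith
    qed
    then have "sum f {..<M} \<le> real M * B powr p"
      using sum_mono[of "{..<M}" f "\<lambda>_. B powr p"] by simp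
    also have "\<dots> \<le> B * B powr p"
      using assms by (intro mult_right_mono) (auto simp: M_def)
    finally show ?thesis
      using assms by (simp add: powr_add mult.commute)
  qed
  also have "sum f {M..<N} \<le> s / (s-1) * B powr (p+1)"
  proof -
    have "f k \<le> B powr q * real (Suc k) powr (-s)" for k
    proof -
      have "f k \<le> real (Suc k) powr p * (real (Suc k) / B) powr (-q)"
        unfolding f_def by (intro mult_left_mono) auto
      also have "\<dots> = B powr q * real (Suc k) powr (-s)"
        using assms by (simp add: s_def powr_divide powr_minus powr_diff field_simps)
      finally show ?thesis .
    qed
    then have "sum f {M..<N} \<le> B powr q * (\<Sum>k\<in>{M..<N}. real (Suc k) powr (-s))"
      by (simp add: sum_distrib_left sum_mono)
    also have "\<dots> \<le> B powr q * (s / (s-1) * real (Suc M) powr (1-s))"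
      using assms by (intro mult_left_mono sum_powr_tail_le) (auto simp: s_def)
    also have "\<dots> \<le> B powr q * (s / (s-1) * B powr (1-s))"
      using assms \<open>B < real (Suc M)\<close> by (intro mult_left_mono powr_mono2') (auto simp: s_def)
    also have "\<dots> = s / (s-1) * B powr (q + (1-s))"
      by (simp add: powr_add)
    also have "q + (1-s) = p + 1"
      by (simp add: s_def)
    finally show ?thesis .
  qed
  finally have "sum f {..<N} \<le> (1 + s / (s-1)) * B powr (p+1)"
    by (simp add: distrib_right)
  then show ?thesis
    by (simp add: f_def s_def add.commute)
qed

lemma sum_powr_min_le:
  fixes p q :: real
  assumes "0 \<le> p" "q \<noteq> p + 1"
  obtains C where "0 \<le> C" and "\<And>N B. 0 < B \<Longrightarrow>
    (\<Sum>k<N. real (Suc k) powr p * min 1 ((real (Suc k) / B) powr (-q)))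
      \<le> C * B powr (min (p+1) q) * real N powr (p + 1 - min (p+1) q)"
proof (cases "p + 1 < q")
  case True
  show ?thesis
  proof (rule that)
    show "0 \<le> 1 + (q-p) / (q-p-1)"
      using True by simp
  next
    fix N :: nat and B :: real
    assume "0 < B"
    show "(\<Sum>k<N. real (Suc k) powr p * min 1 ((real (Suc k) / B) powr (-q)))
      \<le> (1 + (q-p) / (q-p-1)) * B powr (min (p+1) q) * real N powr (p + 1 - min (p+1) q)"
      using sum_powr_min_le_convergent[OF assms(1) True \<open>0 < B\<close>, of N] True
      by (cases "N = 0") auto
  qed
next
  case False
  then have "-1 < p - q"
    using assms by simp
  show ?thesis
  proof (rule that)
    show "0 \<le> max 1 (1 / (p - q + 1))"
      by simp
  next
    fix N :: nat and B :: real
    assume "0 < B"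
    have "(\<Sum>k<N. real (Suc k) powr p * min 1 ((real (Suc k) / B) powr (-q)))
        \<le> (\<Sum>k<N. B powr q * real (Suc k) powr (p - q))"
    proof (intro sum_mono)
      fix k
      have "real (Suc k) powr p * min 1 ((real (Suc k) / B) powr (-q))
          \<le> real (Suc k) powr p * (real (Suc k) / B) powr (-q)"
        by (intro mult_left_mono) auto
      also have "\<dots> = B powr q * real (Suc k) powr (p - q)"
        using \<open>0 < B\<close> by (simp add: powr_divide powr_minus powr_diff field_simps)
      finally show "real (Suc k) powr p * min 1 ((real (Suc k) / B) powr (-q))
          \<le> B powr q * real (Suc k) powr (p - q)" .
    qed
    also have "\<dots> \<le> B powr q * (max 1 (1 / (p - q + 1)) * real N powr (p - q + 1))"
      unfolding sum_distrib_left[symmetric]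
      using sum_powr_le[OF \<open>-1 < p - q\<close>] by (intro mult_left_mono) auto
    finally show "(\<Sum>k<N. real (Suc k) powr p * min 1 ((real (Suc k) / B) powr (-q)))
      \<le> max 1 (1 / (p - q + 1)) * B powr (min (p+1) q) * real N powr (p + 1 - min (p+1) q)"
      using False by (simp add: algebra_simps)
  qed
qed

lemma riemann_sum_powr_min_le:
  fixes p q :: real
  assumes "0 \<le> p" "q \<noteq> p + 1"
  obtains C where "0 \<le> C" and "\<And>N B. 0 < B \<Longrightarrow>
    (\<Sum>k<N. (real (Suc k) / real N) powr p * min 1 ((real (Suc k) / B) powr (-q)))
      \<le> C * real N * (B / real N) powr (min (p+1) q)"
proof -
  obtain C where "0 \<le> C" and C: "\<And>N B. 0 < B \<Longrightarrow>
    (\<Sum>k<N. real (Suc k) powr p * min 1 ((real (Suc k) / B) powr (-q)))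
      \<le> C * B powr (min (p+1) q) * real N powr (p + 1 - min (p+1) q)"
    using sum_powr_min_le[OF assms] by blast
  show ?thesis
  proof (rule that[OF \<open>0 \<le> C\<close>])
    fix N :: nat and B :: real
    assume "0 < B"
    define r where "r = min (p+1) q"
    show "(\<Sum>k<N. (real (Suc k) / real N) powr p * min 1 ((real (Suc k) / B) powr (-q)))
        \<le> C * real N * (B / real N) powr r"
    proof (cases "N = 0")
      case False
      have "(\<Sum>k<N. (real (Suc k) / real N) powr p * min 1 ((real (Suc k) / B) powr (-q)))
          = (\<Sum>k<N. real (Suc k) powr p * min 1 ((real (Suc k) / B) powr (-q))) / real N powr p"
        by (simp add: powr_divide sum_divide_distrib)
      also have "\<dots> \<le> C * B powr r * real N powr (p + 1 - r) / real N powr p"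
        using C[OF \<open>0 < B\<close>, of N] by (intro divide_right_mono) (auto simp: r_def)
      also have "real N powr (p + 1 - r) = real N powr p * real N / real N powr r"
        using False by (simp add: powr_diff powr_add)
      also have "C * B powr r * (real N powr p * real N / real N powr r) / real N powr p
          = C * real N * (B / real N) powr r"
        using False \<open>0 < B\<close> by (simp add: powr_divide)
      finally show ?thesis .
    qed simp
  qed
qed

section \<open>The noise kernel\<close>

definition noise_kernel :: "(nat \<Rightarrow> real) \<Rightarrow> real \<Rightarrow> real" where
  "noise_kernel lam s = (\<Sum>j. (lam (Suc j))\<^sup>2 * exp (-2 * lam (Suc j) * s))"

lemma noise_kernel_le_sum:
  assumes "\<forall>j\<ge>1. 0 \<le> lam j" "\<forall>j\<ge>1. lam j \<le> c" "summable (\<lambda>j. lam (Suc j))" "0 \<le> s"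
  shows "noise_kernel lam s \<le> c * (\<Sum>j. lam (Suc j))"
proof -
  have term_le: "(lam (Suc j))\<^sup>2 * exp (-2 * lam (Suc j) * s) \<le> c * lam (Suc j)" for j
  proof -
    have "0 \<le> lam (Suc j)" "lam (Suc j) \<le> c"
      using assms(1,2) by auto
    moreover have "exp (-2 * lam (Suc j) * s) \<le> 1"
      using \<open>0 \<le> lam (Suc j)\<close> assms(4) by simp
    ultimately have "(lam (Suc j))\<^sup>2 * exp (-2 * lam (Suc j) * s) \<le> lam (Suc j) * lam (Suc j)"
      by (simp add: power2_eq_square mult_left_le)
    also have "\<dots> \<le> c * lam (Suc j)"
      using \<open>0 \<le> lam (Suc j)\<close> \<open>lam (Suc j) \<le> c\<close> by (intro mult_right_mono)
    finally show ?thesis .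
  qed
  have "summable (\<lambda>j. c * lam (Suc j))"
    using assms(3) by (rule summable_mult)
  moreover have "summable (\<lambda>j. (lam (Suc j))\<^sup>2 * exp (-2 * lam (Suc j) * s))"
    using term_le by (intro summable_comparison_test'[OF \<open>summable (\<lambda>j. c * lam (Suc j))\<close>]) simp
  ultimately have "noise_kernel lam s \<le> (\<Sum>j. c * lam (Suc j))"
    unfolding noise_kernel_def using term_le by (intro suminf_le)
  also have "\<dots> = c * (\<Sum>j. lam (Suc j))"
    by (rule suminf_mult[OF assms(3)])
  finally show ?thesis .
qed

lemma sq_mult_exp_le:
  fixes x s :: real
  assumes "0 \<le> x" "0 < s"
  shows "x\<^sup>2 * exp (-2 * x * s) \<le> 1 / s\<^sup>2"
proof -
  have "x * s \<le> exp (x * s)"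
    using exp_ge_add_one_self[of "x * s"] by linarith
  then have "(x * s)\<^sup>2 \<le> (exp (x * s))\<^sup>2"
    using assms by (intro power_mono) auto
  also have "\<dots> = exp (2 * x * s)"
    by (simp add: power2_eq_square exp_add[symmetric])
  finally show ?thesis
    using assms by (simp add: exp_minus field_simps)
qed

lemma noise_kernel_le_powr:
  assumes "\<forall>j\<ge>1. 0 \<le> lam j" "\<forall>j\<ge>1. lam j \<le> c * real j powr (-\<beta>)" "0 < c" "1 < \<beta>" "0 < s"
  shows "noise_kernel lam s \<le> (1 + 2*\<beta> / (2*\<beta> - 1)) * c powr (1/\<beta>) * s powr (-(2 - 1/\<beta>))"
proof -
  define B where "B = (c * s) powr (1/\<beta>)"
  have "0 < B"
    using assms by (simp add: B_def)
  \<comment> \<open>the factor \<open>powr 0\<close> fits \<open>sum_powr_min_le_convergent\<close> with \<open>p = 0\<close>\<close>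
  define g where "g j = real (Suc j) powr 0 * min 1 ((real (Suc j) / B) powr (-(2*\<beta>)))" for j
  have term_le: "(lam (Suc j))\<^sup>2 * exp (-2 * lam (Suc j) * s) \<le> g j / s\<^sup>2" for j
  proof -
    define x where "x = lam (Suc j)"
    have "0 \<le> x" "x \<le> c * real (Suc j) powr (-\<beta>)"
      using assms(1,2) by (auto simp: x_def)
    have "x\<^sup>2 * exp (-2 * x * s) \<le> x\<^sup>2"
      using \<open>0 \<le> x\<close> assms(5) by (simp add: mult_left_le)
    also have "\<dots> \<le> (c * real (Suc j) powr (-\<beta>))\<^sup>2"
      using \<open>0 \<le> x\<close> \<open>x \<le> _\<close> by (intro power_mono)
    also have "\<dots> = c\<^sup>2 * real (Suc j) powr (-(2*\<beta>))"
      by (simp add: power_mult_distrib power2_eq_square powr_add[symmetric])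
    also have "\<dots> = (real (Suc j) / B) powr (-(2*\<beta>)) / s\<^sup>2"
    proof -
      have "B powr (2*\<beta>) = (c * s)\<^sup>2"
        using assms by (simp add: B_def powr_powr)
      moreover have "(real (Suc j) / B) powr (-(2*\<beta>)) = B powr (2*\<beta>) / real (Suc j) powr (2*\<beta>)"
        using \<open>0 < B\<close> by (simp add: powr_minus_divide powr_divide)
      ultimately show ?thesis
        using assms by (simp add: powr_minus_divide power_mult_distrib)
    qed
    finally have "x\<^sup>2 * exp (-2 * x * s) \<le> (real (Suc j) / B) powr (-(2*\<beta>)) / s\<^sup>2" .
    moreover have "x\<^sup>2 * exp (-2 * x * s) \<le> 1 / s\<^sup>2"
      using sq_mult_exp_le \<open>0 \<le> x\<close> assms(5) by blast
    ultimately show ?thesis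
      by (simp add: g_def x_def min_def)
  qed
  define K where "K = (1 + 2*\<beta> / (2*\<beta> - 1)) * (B / s\<^sup>2)"
  have partial_le: "(\<Sum>j<n. (lam (Suc j))\<^sup>2 * exp (-2 * lam (Suc j) * s)) \<le> K" for n
  proof -
    have "(\<Sum>j<n. (lam (Suc j))\<^sup>2 * exp (-2 * lam (Suc j) * s)) \<le> (\<Sum>j<n. g j) / s\<^sup>2"
      unfolding sum_divide_distrib by (intro sum_mono term_le)
    also have "\<dots> \<le> K"
      using sum_powr_min_le_convergent[of 0 "2*\<beta>" B n] assms \<open>0 < B\<close>
      unfolding K_def g_def times_divide_eq_right by (intro divide_right_mono) auto
    finally show ?thesis .
  qed
  have "noise_kernel lam s \<le> K"
    unfolding noise_kernel_def
    using assms(1) partial_le by (intro suminf_le_const summableI_nonneg_bounded) auto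
  also have "B / s\<^sup>2 = c powr (1/\<beta>) * s powr (-(2 - 1/\<beta>))"
  proof -
    have "s powr (-(2 - 1/\<beta>)) = s powr (1/\<beta>) * s powr (-2)"
      by (simp add: powr_add[symmetric])
    also have "s powr (-2) = 1 / s\<^sup>2"
      using assms by (simp add: powr_minus divide_inverse)
    finally show ?thesis
      using assms by (simp add: B_def powr_mult)
  qed
  then have "K = (1 + 2*\<beta> / (2*\<beta> - 1)) * c powr (1/\<beta>) * s powr (-(2 - 1/\<beta>))"
    unfolding K_def by simp
  finally show ?thesis .
qed

lemma noise_kernel_bounds:
  assumes "\<forall>j\<ge>1. 0 \<le> lam j" "summable (\<lambda>j. lam (Suc j))"
    and "\<forall>j\<ge>1. lam j \<le> c * real j powr (-\<beta>)" "1 < \<beta>"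
  obtains K where "0 \<le> K" "\<And>s. 0 \<le> s \<Longrightarrow> noise_kernel lam s \<le> K"
    "\<And>s. 0 < s \<Longrightarrow> noise_kernel lam s \<le> K * s powr (-(2 - 1/\<beta>))"
proof -
  define c' where "c' = max c 1"
  have decay: "\<forall>j\<ge>1. lam j \<le> c' * real j powr (-\<beta>)"
  proof (intro allI impI)
    fix j :: nat
    assume "1 \<le> j"
    then have "lam j \<le> c * real j powr (-\<beta>)"
      using assms(3) by blast
    also have "\<dots> \<le> c' * real j powr (-\<beta>)"
      by (intro mult_right_mono) (auto simp: c'_def)
    finally show "lam j \<le> c' * real j powr (-\<beta>)" .
  qed
  have bounded: "\<forall>j\<ge>1. lam j \<le> c'"
  proof (intro allI impI)
    fix j :: nat
    assume "1 \<le> j"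
    have "real j powr (-\<beta>) \<le> real j powr 0"
      using \<open>1 \<le> j\<close> assms(4) by (intro powr_mono) auto
    then have "c' * real j powr (-\<beta>) \<le> c'"
      using \<open>1 \<le> j\<close> by (simp add: c'_def mult_left_le)
    then show "lam j \<le> c'"
      using decay \<open>1 \<le> j\<close> by (meson order_trans)
  qed
  define K0 where "K0 = c' * (\<Sum>j. lam (Suc j))"
  define K1 where "K1 = (1 + 2*\<beta> / (2*\<beta> - 1)) * c' powr (1/\<beta>)"
  have "0 \<le> K0"
    unfolding K0_def using assms(1,2)
    by (intro mult_nonneg_nonneg suminf_nonneg) (auto simp: c'_def)
  have "0 \<le> K1"
    unfolding K1_def using assms(4) by simp
  show ?thesis
  proof (rule that[of "K0 + K1"])
    show "0 \<le> K0 + K1"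
      using \<open>0 \<le> K0\<close> \<open>0 \<le> K1\<close> by simp
  next
    fix s :: real
    assume "0 \<le> s"
    then show "noise_kernel lam s \<le> K0 + K1"
      using noise_kernel_le_sum[OF assms(1) bounded assms(2) \<open>0 \<le> s\<close>] \<open>0 \<le> K1\<close>
      unfolding K0_def by linarith
  next
    fix s :: real
    assume "0 < s"
    then have "noise_kernel lam s \<le> K1 * s powr (-(2 - 1/\<beta>))"
      using noise_kernel_le_powr[OF assms(1) decay _ assms(4)] by (simp add: K1_def c'_def)
    also have "\<dots> \<le> (K0 + K1) * s powr (-(2 - 1/\<beta>))"
      using \<open>0 \<le> K0\<close> by (intro mult_right_mono) auto
    finally show "noise_kernel lam s \<le> (K0 + K1) * s powr (-(2 - 1/\<beta>))" .
  qed
qed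

section \<open>The step-size schedule\<close>

lemma step_size_le:
  assumes "0 \<le> eta0" "0 \<le> \<gamma>" "i \<le> N"
  shows "step_size eta0 \<gamma> N i \<le> eta0"
proof (cases "N = 0")
  case False
  have "(1 - real i / real N) powr \<gamma> \<le> 1"
    using assms False by (intro powr_le1) (auto simp: field_simps)
  then show ?thesis
    using assms(1) by (simp add: step_size_def mult_left_le)
qed (use assms in \<open>simp add: step_size_def\<close>)

lemma sched_time_le:
  assumes "0 \<le> eta0" "0 \<le> \<gamma>"
  shows "sched_time eta0 \<gamma> N N \<le> eta0 * real N"
proof -
  have "sched_time eta0 \<gamma> N N \<le> (\<Sum>i<N. eta0)"
    unfolding sched_time_def using assms by (intro sum_mono step_size_le) auto
  then show ?thesis
    by (simp add: mult.commute)
qed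

lemma step_size_rev:
  assumes "j < N"
  shows "step_size eta0 \<gamma> N (N - Suc j) = eta0 * (real (Suc j) / real N) powr \<gamma>"
proof -
  have "1 - real (N - Suc j) / real N = real (Suc j) / real N"
    using assms by (simp add: field_simps)
  then show ?thesis
    by (simp add: step_size_def)
qed

lemma sched_time_remaining:
  assumes "l \<le> N"
  shows "sched_time eta0 \<gamma> N N - sched_time eta0 \<gamma> N (N - l)
           = (\<Sum>j<l. step_size eta0 \<gamma> N (N - Suc j))"
  using assms
proof (induction l)
  case (Suc l)
  have "N - l = Suc (N - Suc l)"
    using Suc.prems by simp
  then have "sched_time eta0 \<gamma> N (N - l)
      = sched_time eta0 \<gamma> N (N - Suc l) + step_size eta0 \<gamma> N (N - Suc l)"
    by (simp add: sched_time_def)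
  with Suc show ?case
    by simp
qed simp

lemma remaining_time_eq:
  assumes "l \<le> N"
  shows "sched_time eta0 \<gamma> N N - sched_time eta0 \<gamma> N (N - l)
           = eta0 * real N powr (-\<gamma>) * (\<Sum>j<l. real (Suc j) powr \<gamma>)"
  using assms
  by (simp add: sched_time_remaining step_size_rev powr_divide powr_minus_divide sum_distrib_left)

lemma remaining_time_ge:
  assumes "0 \<le> \<gamma>" "0 \<le> eta0" "1 \<le> l" "l \<le> N"
  shows "eta0 * real (Suc l) powr (\<gamma>+1)
           \<le> 2 powr (\<gamma>+1) * (\<gamma>+1) * real N powr \<gamma>
              * (sched_time eta0 \<gamma> N N - sched_time eta0 \<gamma> N (N - l))"
proof -
  define \<Sigma> where "\<Sigma> = (\<Sum>j<l. real (Suc j) powr \<gamma>)"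
  have "real (Suc l) powr (\<gamma>+1) \<le> (2 * real l) powr (\<gamma>+1)"
    using assms by (intro powr_mono2) auto
  also have "\<dots> = 2 powr (\<gamma>+1) * real l powr (\<gamma>+1)"
    by (simp add: powr_mult)
  also have "\<dots> \<le> 2 powr (\<gamma>+1) * ((\<gamma>+1) * \<Sigma>)"
    using sum_powr_ge[OF assms(1), of l] assms(1)
    by (intro mult_left_mono) (auto simp: \<Sigma>_def pos_divide_le_eq mult.commute)
  finally have "eta0 * real (Suc l) powr (\<gamma>+1) \<le> eta0 * (2 powr (\<gamma>+1) * ((\<gamma>+1) * \<Sigma>))"
    using assms(2) by (rule mult_left_mono)
  also have "\<dots> = 2 powr (\<gamma>+1) * (\<gamma>+1) * (eta0 * \<Sigma>)"
    by (simp add: mult_ac)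
  also have "eta0 * \<Sigma> = real N powr \<gamma> * (sched_time eta0 \<gamma> N N - sched_time eta0 \<gamma> N (N - l))"
    using assms by (simp add: remaining_time_eq \<Sigma>_def powr_add[symmetric])
  finally show ?thesis
    by (simp add: mult.assoc)
qed

lemma kernel_at_remaining_time_le:
  fixes g :: "real \<Rightarrow> real"
  assumes g_bounded: "\<And>s. 0 \<le> s \<Longrightarrow> g s \<le> K"
    and g_decay: "\<And>s. 0 < s \<Longrightarrow> g s \<le> K * s powr (-a)"
    and "0 \<le> K" "0 \<le> a" "0 \<le> \<gamma>" "0 < eta0" "1 \<le> B"
    and B: "2 powr (\<gamma>+1) * (\<gamma>+1) * real N powr \<gamma> \<le> eta0 * B powr (\<gamma>+1)"
    and "l < N"
  shows "g (sched_time eta0 \<gamma> N N - sched_time eta0 \<gamma> N (N - l))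
           \<le> K * min 1 ((real (Suc l) / B) powr (-((\<gamma>+1) * a)))"
proof -
  define S where "S = sched_time eta0 \<gamma> N N - sched_time eta0 \<gamma> N (N - l)"
  have "0 \<le> S"
    using assms by (simp add: S_def remaining_time_eq sum_nonneg)
  have "g S \<le> K * (real (Suc l) / B) powr (-((\<gamma>+1) * a))"
  proof (cases "l = 0")
    case True
    \<comment> \<open>no time remains after the last step; this case is why \<open>1 \<le> B\<close> is assumed\<close>
    have "1 \<le> B powr ((\<gamma>+1) * a)"
      using assms by (intro ge_one_powr_ge_zero) auto
    then have "K \<le> K * (real (Suc l) / B) powr (-((\<gamma>+1) * a))"
      using True \<open>0 \<le> K\<close> by (simp add: powr_minus_divide powr_divide mult_le_cancel_left1)
    then show ?thesis
      using g_bounded \<open>0 \<le> S\<close> by (meson order_trans)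
  next
    case False
    define r where "r = (real (Suc l) / B) powr (\<gamma>+1)"
    have "0 < r"
      using assms by (simp add: r_def)
    have "eta0 * real (Suc l) powr (\<gamma>+1) \<le> eta0 * (B powr (\<gamma>+1) * S)"
      using remaining_time_ge[of \<gamma> eta0 l N] mult_right_mono[OF B \<open>0 \<le> S\<close>] assms False
      by (simp add: S_def algebra_simps)
    then have "r \<le> S"
      using assms by (simp add: r_def powr_divide pos_divide_le_eq mult.commute)
    then have "0 < S"
      using \<open>0 < r\<close> by simp
    then have "g S \<le> K * S powr (-a)"
      by (rule g_decay)
    also have "\<dots> \<le> K * r powr (-a)"
      using \<open>0 < r\<close> \<open>r \<le> S\<close> \<open>0 \<le> K\<close> \<open>0 \<le> a\<close> by (intro mult_left_mono powr_mono2') auto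
    also have "r powr (-a) = (real (Suc l) / B) powr (-((\<gamma>+1) * a))"
      by (simp add: r_def powr_powr)
    finally show ?thesis .
  qed
  then show ?thesis
    using g_bounded[OF \<open>0 \<le> S\<close>] \<open>0 \<le> K\<close> by (simp add: S_def min_mult_distrib_left)
qed

lemma weighted_kernel_sum_le:
  fixes g :: "real \<Rightarrow> real"
  assumes "\<And>s. 0 \<le> s \<Longrightarrow> g s \<le> K" "\<And>s. 0 < s \<Longrightarrow> g s \<le> K * s powr (-a)"
    and "0 \<le> K" "0 \<le> a" "0 \<le> \<gamma>" "0 < eta0" "1 \<le> B"
    and "2 powr (\<gamma>+1) * (\<gamma>+1) * real N powr \<gamma> \<le> eta0 * B powr (\<gamma>+1)"
  shows "(\<Sum>i<N. (step_size eta0 \<gamma> N i)\<^sup>2 * g (sched_time eta0 \<gamma> N N - sched_time eta0 \<gamma> N (Suc i)))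
           \<le> K * eta0\<^sup>2 * (\<Sum>l<N. (real (Suc l) / real N) powr (2*\<gamma>)
                                   * min 1 ((real (Suc l) / B) powr (-((\<gamma>+1) * a))))"
proof -
  have "(\<Sum>i<N. (step_size eta0 \<gamma> N i)\<^sup>2 * g (sched_time eta0 \<gamma> N N - sched_time eta0 \<gamma> N (Suc i)))
      = (\<Sum>l<N. (step_size eta0 \<gamma> N (N - Suc l))\<^sup>2
                 * g (sched_time eta0 \<gamma> N N - sched_time eta0 \<gamma> N (Suc (N - Suc l))))"
    by (rule sum.nat_diff_reindex[symmetric])
  also have "\<dots> \<le> (\<Sum>l<N. K * eta0\<^sup>2 * ((real (Suc l) / real N) powr (2*\<gamma>)
                                   * min 1 ((real (Suc l) / B) powr (-((\<gamma>+1) * a)))))"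
  proof (intro sum_mono)
    fix l assume "l \<in> {..<N}"
    then have "l < N" "Suc (N - Suc l) = N - l"
      by auto
    have sq: "(step_size eta0 \<gamma> N (N - Suc l))\<^sup>2 = eta0\<^sup>2 * (real (Suc l) / real N) powr (2*\<gamma>)"
      using \<open>l < N\<close> by (simp add: step_size_rev power_mult_distrib powr_power)
    have "g (sched_time eta0 \<gamma> N N - sched_time eta0 \<gamma> N (Suc (N - Suc l)))
        \<le> K * min 1 ((real (Suc l) / B) powr (-((\<gamma>+1) * a)))"
      unfolding \<open>Suc (N - Suc l) = N - l\<close> by (rule kernel_at_remaining_time_le[OF assms \<open>l < N\<close>])
    then have "(step_size eta0 \<gamma> N (N - Suc l))\<^sup>2
                 * g (sched_time eta0 \<gamma> N N - sched_time eta0 \<gamma> N (Suc (N - Suc l)))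
               \<le> (step_size eta0 \<gamma> N (N - Suc l))\<^sup>2
                   * (K * min 1 ((real (Suc l) / B) powr (-((\<gamma>+1) * a))))"
      by (rule mult_left_mono) simp
    also have "\<dots> = K * eta0\<^sup>2 * ((real (Suc l) / real N) powr (2*\<gamma>)
                   * min 1 ((real (Suc l) / B) powr (-((\<gamma>+1) * a))))"
      unfolding sq by (simp only: mult_ac)
    finally show "(step_size eta0 \<gamma> N (N - Suc l))\<^sup>2
                 * g (sched_time eta0 \<gamma> N N - sched_time eta0 \<gamma> N (Suc (N - Suc l)))
               \<le> K * eta0\<^sup>2 * ((real (Suc l) / real N) powr (2*\<gamma>)
                   * min 1 ((real (Suc l) / B) powr (-((\<gamma>+1) * a))))" .
  qed
  also have "\<dots> = K * eta0\<^sup>2 * (\<Sum>l<N. (real (Suc l) / real N) powr (2*\<gamma>)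
                                   * min 1 ((real (Suc l) / B) powr (-((\<gamma>+1) * a))))"
    by (rule sum_distrib_left[symmetric])
  finally show ?thesis .
qed

section \<open>The noise term\<close>

lemma noise_term_eq:
  "noise_term lam eta0 \<gamma> N
     = (\<Sum>i<N. (step_size eta0 \<gamma> N i)\<^sup>2
          * noise_kernel lam (sched_time eta0 \<gamma> N N - sched_time eta0 \<gamma> N (Suc i)))"
  by (simp add: noise_term_def noise_kernel_def)

lemma schedule_scale_bounds:
  assumes "0 < eta0" "eta0 \<le> E" "1 \<le> N" "0 \<le> \<gamma>" "2 powr (\<gamma>+1) * (\<gamma>+1) \<le> E"
  defines "B \<equiv> real N * (E / (eta0 * real N)) powr (1/(\<gamma>+1))"
  shows "1 \<le> B" and "2 powr (\<gamma>+1) * (\<gamma>+1) * real N powr \<gamma> \<le> eta0 * B powr (\<gamma>+1)"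
proof -
  have "0 < E" "0 < B"
    using assms by (auto simp: B_def)
  have B_pow: "eta0 * B powr (\<gamma>+1) = E * real N powr \<gamma>"
  proof -
    have "B powr (\<gamma>+1) = real N powr (\<gamma>+1) * (E / (eta0 * real N))"
      using assms \<open>0 < E\<close> by (simp add: B_def powr_mult powr_powr)
    then show ?thesis
      using assms by (simp add: powr_add)
  qed
  have "eta0 \<le> E * 1"
    using assms(2) by simp
  also have "\<dots> \<le> E * real N powr \<gamma>"
    using assms \<open>0 < E\<close> by (intro mult_left_mono ge_one_powr_ge_zero) auto
  finally have "1 \<le> E * real N powr \<gamma> / eta0"
    using assms by (simp add: pos_le_divide_eq)
  also have "\<dots> = B powr (\<gamma>+1)"
    using B_pow assms by (simp add: field_simps)
  finally have "1 powr (1/(\<gamma>+1)) \<le> (B powr (\<gamma>+1)) powr (1/(\<gamma>+1))"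
    using assms by (intro powr_mono2) auto
  then show "1 \<le> B"
    using assms \<open>0 < B\<close> by (simp add: powr_powr)
  show "2 powr (\<gamma>+1) * (\<gamma>+1) * real N powr \<gamma> \<le> eta0 * B powr (\<gamma>+1)"
    unfolding B_pow using assms(5) by (intro mult_right_mono) auto
qed

lemma noise_term_le:
  fixes lam :: "nat \<Rightarrow> real"
  assumes "0 \<le> K" "\<And>s. 0 \<le> s \<Longrightarrow> noise_kernel lam s \<le> K"
      "\<And>s. 0 < s \<Longrightarrow> noise_kernel lam s \<le> K * s powr (-a)"
    and riemann_sum: "\<And>B. 0 < B \<Longrightarrow>
      (\<Sum>l<N. (real (Suc l) / real N) powr (2*\<gamma>)
               * min 1 ((real (Suc l) / B) powr (-((\<gamma>+1) * a))))
        \<le> C * real N * (B / real N) powr ((\<gamma>+1) * (1+\<rho>))"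
    and "0 \<le> C" "0 \<le> a" "0 \<le> \<gamma>" "0 \<le> \<rho>" "0 < eta0"
    and E: "2 powr (\<gamma>+1) * (\<gamma>+1) \<le> E" "eta0 \<le> E"
    and T: "1 \<le> sched_time eta0 \<gamma> N N"
  shows "noise_term lam eta0 \<gamma> N
           \<le> K * C * E powr (1+\<rho>) * eta0 * sched_time eta0 \<gamma> N N powr (-\<rho>)"
proof -
  define X where "X = eta0 * real N"
  define B where "B = real N * (E / X) powr (1/(\<gamma>+1))"
  have "1 \<le> N"
    using T by (cases N) (auto simp: sched_time_def)
  then have "0 < X" "0 < E" "0 < B"
    using assms by (auto simp: X_def B_def)
  have "1 \<le> B" "2 powr (\<gamma>+1) * (\<gamma>+1) * real N powr \<gamma> \<le> eta0 * B powr (\<gamma>+1)"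
    using schedule_scale_bounds[OF \<open>0 < eta0\<close> E(2) \<open>1 \<le> N\<close> \<open>0 \<le> \<gamma>\<close> E(1)]
    by (simp_all add: B_def X_def)
  then have "noise_term lam eta0 \<gamma> N
      \<le> K * eta0\<^sup>2 * (\<Sum>l<N. (real (Suc l) / real N) powr (2*\<gamma>)
                                * min 1 ((real (Suc l) / B) powr (-((\<gamma>+1) * a))))"
    unfolding noise_term_eq using assms by (intro weighted_kernel_sum_le) auto
  also have "\<dots> \<le> K * eta0\<^sup>2 * (C * real N * (B / real N) powr ((\<gamma>+1) * (1+\<rho>)))"
    using riemann_sum[OF \<open>0 < B\<close>] assms by (intro mult_left_mono) auto
  also have "(B / real N) powr ((\<gamma>+1) * (1+\<rho>)) = E powr (1+\<rho>) / (X * X powr \<rho>)"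
    using assms \<open>1 \<le> N\<close> \<open>0 < X\<close> \<open>0 < E\<close> by (simp add: B_def powr_powr powr_divide powr_add)
  also have "K * eta0\<^sup>2 * (C * real N * (E powr (1+\<rho>) / (X * X powr \<rho>)))
      = K * C * E powr (1+\<rho>) * eta0 * X powr (-\<rho>)"
    using \<open>0 < X\<close> assms by (simp add: X_def powr_minus power2_eq_square field_simps)
  also have "\<dots> \<le> K * C * E powr (1+\<rho>) * eta0 * sched_time eta0 \<gamma> N N powr (-\<rho>)"
    using T sched_time_le[of eta0 \<gamma> N] assms
    by (intro mult_left_mono powr_mono2') (auto simp: X_def)
  finally show ?thesis .
qed

lemma noise_exponent_eq:
  fixes \<beta> \<gamma> :: real
  assumes "0 < \<gamma> + 1"
  shows "min (2*\<gamma> + 1) ((\<gamma>+1) * (2 - 1/\<beta>)) = (\<gamma>+1) * (1 + min (1 - 1/\<beta>) (\<gamma> / (\<gamma>+1)))"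
proof -
  have "(\<gamma>+1) * (1 + min (1 - 1/\<beta>) (\<gamma> / (\<gamma>+1)))
      = min ((\<gamma>+1) * (2 - 1/\<beta>)) ((\<gamma>+1) * (1 + \<gamma> / (\<gamma>+1)))"
    using assms by (simp add: min_add_distrib_right min_mult_distrib_left)
  also have "(\<gamma>+1) * (1 + \<gamma> / (\<gamma>+1)) = 2*\<gamma> + 1"
    using assms by (simp add: field_simps)
  finally show ?thesis
    by (simp add: min.commute)
qed

theorem mainTheorem16:
  fixes lam :: "nat \<Rightarrow> real" and c \<beta> \<gamma> eta_bar :: real
  assumes "\<forall>j\<ge>1. 0 \<le> lam j"
    and "summable (\<lambda>j. lam (Suc j))"
    and "\<forall>j\<ge>1. lam j \<le> c * real j powr (-\<beta>)"
    and "\<beta> > 1" and "\<gamma> > 0" and "\<beta> \<noteq> \<gamma> + 1"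
  shows "\<exists>C. \<forall>(N::nat) eta0. 0 < eta0 \<longrightarrow> eta0 \<le> eta_bar \<longrightarrow>
           1 \<le> sched_time eta0 \<gamma> N N \<longrightarrow>
           noise_term lam eta0 \<gamma> N
             \<le> C * eta0 * sched_time eta0 \<gamma> N N powr (- min (1 - 1/\<beta>) (\<gamma> / (\<gamma> + 1)))"
proof -
  define a where "a = 2 - 1/\<beta>"
  define \<rho> where "\<rho> = min (1 - 1/\<beta>) (\<gamma> / (\<gamma> + 1))"
  define E where "E = 2 powr (\<gamma>+1) * (\<gamma>+1) + max 0 eta_bar"
  have "0 \<le> a" "0 \<le> \<rho>"
    using assms(4,5) by (simp_all add: a_def \<rho>_def field_simps)
  obtain K where K: "0 \<le> K" "\<And>s. 0 \<le> s \<Longrightarrow> noise_kernel lam s \<le> K"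
      "\<And>s. 0 < s \<Longrightarrow> noise_kernel lam s \<le> K * s powr (-a)"
    using noise_kernel_bounds[OF assms(1-4)] unfolding a_def by blast
  have "(\<gamma>+1) * a \<noteq> 2*\<gamma> + 1"
    using assms(4-6) by (simp add: a_def field_simps)
  then obtain C where "0 \<le> C" and C: "\<And>N B. 0 < B \<Longrightarrow>
      (\<Sum>l<N. (real (Suc l) / real N) powr (2*\<gamma>)
               * min 1 ((real (Suc l) / B) powr (-((\<gamma>+1) * a))))
        \<le> C * real N * (B / real N) powr ((\<gamma>+1) * (1+\<rho>))"
    using riemann_sum_powr_min_le[of "2*\<gamma>" "(\<gamma>+1) * a"] noise_exponent_eq[of \<gamma> \<beta>] assms(5)
    by (auto simp: a_def \<rho>_def)
  have "0 \<le> 2 powr (\<gamma>+1) * (\<gamma>+1)"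
    using assms(5) by simp
  then have E: "2 powr (\<gamma>+1) * (\<gamma>+1) \<le> E" "eta_bar \<le> E"
    by (auto simp: E_def)
  have "noise_term lam eta0 \<gamma> N
      \<le> K * C * E powr (1+\<rho>) * eta0 * sched_time eta0 \<gamma> N N powr (-\<rho>)"
    if "0 < eta0" "eta0 \<le> eta_bar" "1 \<le> sched_time eta0 \<gamma> N N" for N eta0
    using noise_term_le[OF K C \<open>0 \<le> C\<close> \<open>0 \<le> a\<close> less_imp_le[OF assms(5)] \<open>0 \<le> \<rho>\<close>
        that(1) E(1) order_trans[OF that(2) E(2)] that(3)] .
  then show ?thesis
    unfolding \<rho>_def by blast
qed

end
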